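(* In $\mathrm U_q(\mathfrak{gl}_3)[[\zeta]]$ one has $$1-C^{(1)}\zeta-C^{(2)}\zeta^2-C^{(3)}\zeta^3=N'_{11}(q^2\zeta)\,N''_{22}(\zeta)\,N'''_{33}(q^{-2}\zeta).$$
   Context: Setting: $\hbar\in\mathbb C$, $q=e^\hbar$, $q^2\neq1$, $\kappa_q=q-q^{-1}$, $[\nu]_q=(q^\nu-q^{-\nu})/\kappa_q$. Let $\mathfrak g=\mathbb CG_1\oplus\mathbb CG_2\oplus\mathbb CG_3$ and define linear forms $\alpha_1,\alpha_2$ on $\mathfrak g$ by $\alpha_1(G_1)=1,\alpha_1(G_2)=-1,\alpha_1(G_3)=0$, $\alpha_2(G_1)=0,\alpha_2(G_2)=1,\alpha_2(G_3)=-1$; put $H_1=G_1-G_2$, $H_2=G_2-G_3$. $\mathrm U_q(\mathfrak{gl}_3)$ is the unital associative $\mathbb C$-algebra generated by $E_1,E_2,F_1,F_2$ and symbols $q^X$, $X\in\mathfrak g$, with relations $q^0=1$, $q^{X_1}q^{X_2}=q^{X_1+X_2}$, $q^XE_iq^{-X}=q^{\alpha_i(X)}E_i$, $q^XF_iq^{-X}=q^{-\alpha_i(X)}F_i$, $[E_i,F_j]=\delta_{ij}(q^{H_i}-q^{-H_i})/\kappa_q$, and for $i\ne j$ the $q$-Serre relations $E_i^2E_j-[2]_qE_iE_jE_i+E_jE_i^2=0$, $F_i^2F_j-[2]_qF_iF_jF_i+F_jF_i^2=0$. For $\nu\in\mathbb C$ one writes $q^{X+\nu}=q^\nu q^X$.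 Further $E_3=E_1E_2-q^{-1}E_2E_1$, $F_3=F_2F_1-qF_1F_2$. Central elements: $C^{(1)}=q^{-2G_1-2}+q^{-2G_2}+q^{-2G_3+2}+\kappa_q^2F_1E_1q^{-G_1-G_2-1}+\kappa_q^2F_2E_2q^{-G_2-G_3+1}+\kappa_q^2F_3E_3q^{-G_1-G_3+1}-\kappa_q^3F_3E_1E_2q^{-G_1-G_3}$, $C^{(2)}=-q^{-2G_1-2G_2-2}-q^{-2G_1-2G_3}-q^{-2G_2-2G_3+2}-\kappa_q^2F_1E_1q^{-G_1-G_2-2G_3+1}-\kappa_q^2F_2E_2q^{-2G_1-G_2-G_3-1}-\kappa_q^2F_3E_3q^{-G_1-2G_2-G_3+1}-\kappa_q^3F_1F_2E_3q^{-G_1-2G_2-G_3+1}$, $C^{(3)}=q^{-2(G_1+G_2+G_3)}$. Matrix entries: in $\mathrm U_q(\mathfrak{gl}_3)[[\zeta]]$ ($\zeta$ a formal variable; series with constant term $1$ are invertible) let $N'_{11}(\zeta)=1-\zeta q^{-2G_1}$, $N'_{22}(\zeta)=1-\zeta q^{-2G_2}$, $N'_{33}(\zeta)=1-\zeta q^{-2G_3}$, $N'_{12}=\kappa_q qF_1q^{-G_1-G_2}$, $N'_{23}=\kappa_q qF_2q^{-G_2-G_3}$, $N'_{13}=\kappa_q qF_3q^{-G_1-G_3}$, $N'_{21}=\kappa_qE_1$, $N'_{32}=\kappa_qE_2$, $N'_{31}=\kappa_qE_3$; and $N''_{22}(\zeta)=N'_{22}(\zeta)-\zeta N'_{21}N'_{11}(\zeta)^{-1}N'_{12}$,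 $N''_{23}(\zeta)=N'_{23}-N'_{21}N'_{11}(\zeta)^{-1}N'_{13}$, $N''_{32}(\zeta)=N'_{32}-\zeta N'_{31}N'_{11}(\zeta)^{-1}N'_{12}$, $N''_{33}(\zeta)=N'_{33}(\zeta)-\zeta N'_{31}N'_{11}(\zeta)^{-1}N'_{13}$, $N'''_{33}(\zeta)=N''_{33}(\zeta)-\zeta N''_{32}(\zeta)N''_{22}(\zeta)^{-1}N''_{23}(\zeta)$. For $c\in\mathbb C$, $N(c\zeta)$ denotes substitution $\zeta\mapsto c\zeta$. *)

theory Defs
  imports Complex_Main "HOL-Computational_Algebra.Formal_Power_Series"
begin

(* An element X = a1 G1 + a2 G2 + a3 G3 of g is encoded by its coordinates (a1,a2,a3);
   the generator q^X is  K a1 a2 a3.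
   The algebra U_q(gl_3) is treated via its universal property: an arbitrary unital
   associative C-algebra A (a ring_1 with a central unital ring homomorphism
   sc : C -> A giving the scalars) together with elements E1 E2 F1 F2 and K
   satisfying all defining relations. *)

definition qq :: "complex \<Rightarrow> complex" where "qq h = exp h"
definition qpow :: "complex \<Rightarrow> complex \<Rightarrow> complex" where "qpow h nu = exp (h * nu)"
definition kap :: "complex \<Rightarrow> complex" where "kap h = qq h - inverse (qq h)"
definition qnum :: "complex \<Rightarrow> complex \<Rightarrow> complex"
  where "qnum h nu = (qpow h nu - qpow h (- nu)) / kap h"

definition is_C_algebra :: "(complex \<Rightarrow> 'a::ring_1) \<Rightarrow> bool" where
  "is_C_algebra sc \<longleftrightarrow> sc 1 = 1 \<and> (\<forall>x y. sc (x + y) = sc x + sc y)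
     \<and> (\<forall>x y. sc (x * y) = sc x * sc y) \<and> (\<forall>z a. sc z * a = a * sc z)"

(* alpha_1(X) = a1 - a2, alpha_2(X) = a2 - a3 ; H1 = G1 - G2, H2 = G2 - G3 *)
definition Uq_gl3_rel ::
  "complex \<Rightarrow> (complex \<Rightarrow> 'a::ring_1) \<Rightarrow> 'a \<Rightarrow> 'a \<Rightarrow> 'a \<Rightarrow> 'a
   \<Rightarrow> (complex \<Rightarrow> complex \<Rightarrow> complex \<Rightarrow> 'a) \<Rightarrow> bool" where
  "Uq_gl3_rel h sc E1 E2 F1 F2 K \<longleftrightarrow>
     K 0 0 0 = 1
   \<and> (\<forall>a1 a2 a3 b1 b2 b3. K (a1 + b1) (a2 + b2) (a3 + b3) = K a1 a2 a3 * K b1 b2 b3)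
   \<and> (\<forall>a1 a2 a3. K a1 a2 a3 * E1 * K (-a1) (-a2) (-a3) = sc (qpow h (a1 - a2)) * E1)
   \<and> (\<forall>a1 a2 a3. K a1 a2 a3 * E2 * K (-a1) (-a2) (-a3) = sc (qpow h (a2 - a3)) * E2)
   \<and> (\<forall>a1 a2 a3. K a1 a2 a3 * F1 * K (-a1) (-a2) (-a3) = sc (qpow h (-(a1 - a2))) * F1)
   \<and> (\<forall>a1 a2 a3. K a1 a2 a3 * F2 * K (-a1) (-a2) (-a3) = sc (qpow h (-(a2 - a3))) * F2)
   \<and> E1 * F1 - F1 * E1 = sc (inverse (kap h)) * (K 1 (-1) 0 - K (-1) 1 0)
   \<and> E2 * F2 - F2 * E2 = sc (inverse (kap h)) * (K 0 1 (-1) - K 0 (-1) 1)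
   \<and> E1 * F2 - F2 * E1 = 0
   \<and> E2 * F1 - F1 * E2 = 0
   \<and> E1 * E1 * E2 - sc (qnum h 2) * (E1 * E2 * E1) + E2 * E1 * E1 = 0
   \<and> E2 * E2 * E1 - sc (qnum h 2) * (E2 * E1 * E2) + E1 * E2 * E2 = 0
   \<and> F1 * F1 * F2 - sc (qnum h 2) * (F1 * F2 * F1) + F2 * F1 * F1 = 0
   \<and> F2 * F2 * F1 - sc (qnum h 2) * (F2 * F1 * F2) + F1 * F2 * F2 = 0"

(* q^{X + nu} = q^nu q^X *)
definition Kq :: "complex \<Rightarrow> (complex \<Rightarrow> 'a::ring_1) \<Rightarrow> (complex \<Rightarrow> complex \<Rightarrow> complex \<Rightarrow> 'a)
   \<Rightarrow> complex \<Rightarrow> complex \<Rightarrow> complex \<Rightarrow> complex \<Rightarrow> 'a" where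
  "Kq h sc K nu a1 a2 a3 = sc (qpow h nu) * K a1 a2 a3"

definition E3 :: "complex \<Rightarrow> (complex \<Rightarrow> 'a::ring_1) \<Rightarrow> 'a \<Rightarrow> 'a \<Rightarrow> 'a" where
  "E3 h sc E1 E2 = E1 * E2 - sc (inverse (qq h)) * (E2 * E1)"

definition F3 :: "complex \<Rightarrow> (complex \<Rightarrow> 'a::ring_1) \<Rightarrow> 'a \<Rightarrow> 'a \<Rightarrow> 'a" where
  "F3 h sc F1 F2 = F2 * F1 - sc (qq h) * (F1 * F2)"

definition Cas1 :: "complex \<Rightarrow> (complex \<Rightarrow> 'a::ring_1) \<Rightarrow> 'a \<Rightarrow> 'a \<Rightarrow> 'a \<Rightarrow> 'a
   \<Rightarrow> (complex \<Rightarrow> complex \<Rightarrow> complex \<Rightarrow> 'a) \<Rightarrow> 'a" where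
  "Cas1 h sc E1 E2 F1 F2 K =
     Kq h sc K (-2) (-2) 0 0 + K 0 (-2) 0 + Kq h sc K 2 0 0 (-2)
   + sc (kap h ^ 2) * F1 * E1 * Kq h sc K (-1) (-1) (-1) 0
   + sc (kap h ^ 2) * F2 * E2 * Kq h sc K 1 0 (-1) (-1)
   + sc (kap h ^ 2) * F3 h sc F1 F2 * E3 h sc E1 E2 * Kq h sc K 1 (-1) 0 (-1)
   - sc (kap h ^ 3) * F3 h sc F1 F2 * E1 * E2 * K (-1) 0 (-1)"

definition Cas2 :: "complex \<Rightarrow> (complex \<Rightarrow> 'a::ring_1) \<Rightarrow> 'a \<Rightarrow> 'a \<Rightarrow> 'a \<Rightarrow> 'a
   \<Rightarrow> (complex \<Rightarrow> complex \<Rightarrow> complex \<Rightarrow> 'a) \<Rightarrow> 'a" where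
  "Cas2 h sc E1 E2 F1 F2 K =
     - Kq h sc K (-2) (-2) (-2) 0 - K (-2) 0 (-2) - Kq h sc K 2 0 (-2) (-2)
   - sc (kap h ^ 2) * F1 * E1 * Kq h sc K 1 (-1) (-1) (-2)
   - sc (kap h ^ 2) * F2 * E2 * Kq h sc K (-1) (-2) (-1) (-1)
   - sc (kap h ^ 2) * F3 h sc F1 F2 * E3 h sc E1 E2 * Kq h sc K 1 (-1) (-2) (-1)
   - sc (kap h ^ 3) * F1 * F2 * E3 h sc E1 E2 * Kq h sc K 1 (-1) (-2) (-1)"

definition Cas3 :: "(complex \<Rightarrow> complex \<Rightarrow> complex \<Rightarrow> 'a::ring_1) \<Rightarrow> 'a" where
  "Cas3 K = K (-2) (-2) (-2)"

definition fps_inv2 :: "'a::ring_1 fps \<Rightarrow> 'a fps" where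
  "fps_inv2 f = (THE g. f * g = 1 \<and> g * f = 1)"

definition fps_subst_scale :: "(complex \<Rightarrow> 'a::ring_1) \<Rightarrow> complex \<Rightarrow> 'a fps \<Rightarrow> 'a fps" where
  "fps_subst_scale sc c f = Abs_fps (\<lambda>n. sc (c ^ n) * fps_nth f n)"

definition Nmat :: "complex \<Rightarrow> (complex \<Rightarrow> 'a::ring_1) \<Rightarrow> 'a \<Rightarrow> 'a \<Rightarrow> 'a \<Rightarrow> 'a
   \<Rightarrow> (complex \<Rightarrow> complex \<Rightarrow> complex \<Rightarrow> 'a) \<Rightarrow> nat \<Rightarrow> nat \<Rightarrow> 'a fps" where
  "Nmat h sc E1 E2 F1 F2 K i j =
    (if i = 1 \<and> j = 1 then 1 - fps_X * fps_const (K (-2) 0 0)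
     else if i = 2 \<and> j = 2 then 1 - fps_X * fps_const (K 0 (-2) 0)
     else if i = 3 \<and> j = 3 then 1 - fps_X * fps_const (K 0 0 (-2))
     else if i = 1 \<and> j = 2 then fps_const (sc (kap h) * sc (qq h) * F1 * K (-1) (-1) 0)
     else if i = 2 \<and> j = 3 then fps_const (sc (kap h) * sc (qq h) * F2 * K 0 (-1) (-1))
     else if i = 1 \<and> j = 3 then fps_const (sc (kap h) * sc (qq h) * F3 h sc F1 F2 * K (-1) 0 (-1))
     else if i = 2 \<and> j = 1 then fps_const (sc (kap h) * E1)
     else if i = 3 \<and> j = 2 then fps_const (sc (kap h) * E2)
     else if i = 3 \<and> j = 1 then fps_const (sc (kap h) * E3 h sc E1 E2)
     else 0)"

definition N2_22 where
  "N2_22 h sc E1 E2 F1 F2 K = (let N = Nmat h sc E1 E2 F1 F2 K in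
     N 2 2 - fps_X * N 2 1 * fps_inv2 (N 1 1) * N 1 2)"
definition N2_23 where
  "N2_23 h sc E1 E2 F1 F2 K = (let N = Nmat h sc E1 E2 F1 F2 K in
     N 2 3 - N 2 1 * fps_inv2 (N 1 1) * N 1 3)"
definition N2_32 where
  "N2_32 h sc E1 E2 F1 F2 K = (let N = Nmat h sc E1 E2 F1 F2 K in
     N 3 2 - fps_X * N 3 1 * fps_inv2 (N 1 1) * N 1 2)"
definition N2_33 where
  "N2_33 h sc E1 E2 F1 F2 K = (let N = Nmat h sc E1 E2 F1 F2 K in
     N 3 3 - fps_X * N 3 1 * fps_inv2 (N 1 1) * N 1 3)"
definition N3_33 where
  "N3_33 h sc E1 E2 F1 F2 K =
     N2_33 h sc E1 E2 F1 F2 K - fps_X * N2_32 h sc E1 E2 F1 F2 K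
       * fps_inv2 (N2_22 h sc E1 E2 F1 F2 K) * N2_23 h sc E1 E2 F1 F2 K"

end

theory Submission
  imports Defs
begin

text \<open>Write D = N'_11(\<zeta>) and D' = N'_11(q^2 \<zeta>). Since q^(-2 G_1) E_i = q^-2 E_i q^(-2 G_1)
  for i = 1, 3, we have D' N'_i1 = N'_i1 D, hence N'_i1 D^-1 = D'^-1 N'_i1, and every second-stage
  entry is N''_ij = D'^-1 M_ij with the polynomial numerator M_ij = D' N'_ij - Y N'_i1 N'_1j
  (Y = \<zeta>, or Y = 1 for (i, j) = (2, 3)). Consequently
  N'''_33 = D'^-1 (M_33 - \<zeta> M_32 M_22^-1 M_23), and with \<sigma> the substitution
  \<zeta> \<mapsto> q^-2 \<zeta> the right-hand side becomes M_22 D^-1 \<sigma>(M_33 - \<zeta> M_32 M_22^-1 M_23).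
  Because D commutes with M_22 and M_22 \<sigma>(M_32) = M_32 \<sigma>(M_22), the inverse of M_22 cancels,
  leaving D^-1 (M_22 \<sigma>(M_33) - \<sigma>(\<zeta>) M_32 \<sigma>(M_23)); the polynomial in brackets equals
  D (1 - C1 \<zeta> - C2 \<zeta>^2 - C3 \<zeta>^3). These polynomial identities are checked coefficientwise
  by normal ordering with the defining relations.\<close>

unbundle fps_syntax

section \<open>Polynomials as coefficient lists\<close>

definition fps_of_list :: "'a::ring_1 list \<Rightarrow> 'a fps" where
  "fps_of_list xs = Abs_fps (\<lambda>n. if n < length xs then xs ! n else 0)"

fun list_add :: "'a::ring_1 list \<Rightarrow> 'a list \<Rightarrow> 'a list" where
  "list_add [] ys = ys"
| "list_add xs [] = xs"
| "list_add (x # xs) (y # ys) = (x + y) # list_add xs ys"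

fun list_conv :: "'a::ring_1 list \<Rightarrow> 'a list \<Rightarrow> 'a list" where
  "list_conv [] ys = []"
| "list_conv (x # xs) ys = list_add (map (\<lambda>y. x * y) ys) (0 # list_conv xs ys)"

lemma fps_of_list_Nil [simp]: "fps_of_list [] = 0"
  by (simp add: fps_of_list_def fps_eq_iff)

lemma fps_of_list_Cons: "fps_of_list (x # xs) = fps_const x + fps_X * fps_of_list xs"
  by (auto simp: fps_of_list_def fps_eq_iff nth_Cons split: nat.splits)

lemma fps_of_list_add: "fps_of_list xs + fps_of_list ys = fps_of_list (list_add xs ys)"
proof (induction xs ys rule: list_add.induct)
  case (3 x xs y ys)
  then show ?case by (simp add: fps_of_list_Cons algebra_simps flip: 3)
qed simp_all

lemma fps_of_list_uminus: "- fps_of_list xs = fps_of_list (map uminus xs)"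
  by (simp add: fps_of_list_def fps_eq_iff)

lemma fps_of_list_diff: "fps_of_list xs - fps_of_list ys = fps_of_list (list_add xs (map uminus ys))"
  by (metis fps_of_list_add fps_of_list_uminus diff_conv_add_uminus)

lemma fps_const_mult_fps_of_list: "fps_const c * fps_of_list xs = fps_of_list (map (\<lambda>y. c * y) xs)"
  by (simp add: fps_of_list_def fps_eq_iff)

lemma fps_X_mult_fps_of_list: "fps_X * fps_of_list xs = fps_of_list (0 # xs)"
  by (simp add: fps_of_list_Cons)

lemma fps_of_list_mult: "fps_of_list xs * fps_of_list ys = fps_of_list (list_conv xs ys)"
proof (induction xs)
  case (Cons x xs)
  have "fps_of_list (x # xs) * fps_of_list ys
      = fps_const x * fps_of_list ys + fps_X * (fps_of_list xs * fps_of_list ys)"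
    by (simp add: fps_of_list_Cons algebra_simps)
  then show ?case
    by (simp add: Cons fps_const_mult_fps_of_list fps_X_mult_fps_of_list fps_of_list_add)
qed simp

lemma fps_X_eq_fps_of_list: "fps_X = fps_of_list [0, 1]"
  by (simp add: fps_of_list_def fps_eq_iff fps_X_def nth_Cons split: nat.splits)

lemma cubic_eq_fps_of_list:
  "1 - fps_const a * fps_X - fps_const b * fps_X ^ 2 - fps_const c * fps_X ^ 3
     = fps_of_list [1, - a, - b, - c]"
proof (rule fps_ext)
  fix n
  show "(1 - fps_const a * fps_X - fps_const b * fps_X ^ 2 - fps_const c * fps_X ^ 3) $ n
      = fps_of_list [1, - a, - b, - c] $ n"
    by (cases n; cases "n - 1"; cases "n - 2";
        simp add: fps_of_list_def fps_X_power_mult_right_nth nth_Cons split: nat.splits)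
qed

section \<open>Inverses and elimination in rings\<close>

lemma fps_inv2_unique:
  fixes f g :: "'a::ring_1 fps"
  assumes "f * g = 1" "g * f = 1"
  shows "fps_inv2 f = g"
  unfolding fps_inv2_def
proof (rule the_equality)
  fix g' assume "f * g' = 1 \<and> g' * f = 1"
  then have "g' = (g' * f) * g" using assms(1) by (metis mult.assoc mult_1_right)
  then show "g' = g" using \<open>f * g' = 1 \<and> g' * f = 1\<close> by simp
qed (use assms in blast)

lemma
  fixes f :: "'a::ring_1 fps"
  assumes "u * f $ 0 = 1" "f $ 0 * u = 1"
  shows fps_mult_inv2: "f * fps_inv2 f = 1"
    and fps_inv2_mult: "fps_inv2 f * f = 1"
proof -
  have r: "f * fps_right_inverse f u = 1" by (rule fps_right_inverse) (fact assms(2))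
  have l: "fps_right_inverse f u * f = 1" by (rule fps_left_inverse') (fact assms)+
  show "f * fps_inv2 f = 1" "fps_inv2 f * f = 1"
    using fps_inv2_unique[OF r l] r l by simp_all
qed

lemma fps_inv2_of_nth_0_eq_1:
  fixes f :: "'a::ring_1 fps"
  assumes "f $ 0 = 1"
  shows "f * fps_inv2 f = 1" "fps_inv2 f * f = 1"
  using fps_mult_inv2[of 1 f] fps_inv2_mult[of 1 f] assms by simp_all

lemma intertwine_inverses:
  fixes A A' C :: "'a::ring_1"
  assumes "A' * C = C * A" "A'i * A' = 1" "A * Ai = 1"
  shows "C * Ai = A'i * C"
proof -
  have "C * Ai = A'i * (A' * C) * Ai" by (simp add: assms(2) mult.assoc flip: mult.assoc[of A'i])
  also have "\<dots> = A'i * C" by (simp add: assms(1,3) mult.assoc)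
  finally show ?thesis .
qed

lemma elim_entry:
  fixes C Ai A' A'i Y B M :: "'a::ring_1"
  assumes "C * Ai = A'i * C" "A'i * A' = 1" "Y * A'i = A'i * Y"
  shows "M - Y * C * Ai * B = A'i * (A' * M - Y * C * B)"
proof -
  have "A'i * (Y * C * B) = Y * C * Ai * B"
    by (metis assms(1,3) mult.assoc)
  then show ?thesis
    by (simp add: right_diff_distrib assms(2) flip: mult.assoc)
qed

lemma mult_rewrite_prefix:
  fixes x y z w :: "'a::semigroup_mult"
  shows "x * y = z \<Longrightarrow> x * (y * w) = z * w"
  by (simp flip: mult.assoc)

lemma mult_rewrite_prefix2:
  fixes x y z r w :: "'a::semigroup_mult"
  shows "x * (y * z) = r \<Longrightarrow> x * (y * (z * w)) = r * w"
  by (simp flip: mult.assoc)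

section \<open>Scalars, linear combinations and rescaling\<close>

locale C_algebra =
  fixes sc :: "complex \<Rightarrow> 'a::ring_1"
  assumes is_C_algebra: "is_C_algebra sc"
begin

lemma sc_1: "sc 1 = 1"
  and sc_add: "sc (x + y) = sc x + sc y"
  and sc_mult: "sc (x * y) = sc x * sc y"
  and sc_central: "sc z * a = a * sc z"
  using is_C_algebra unfolding is_C_algebra_def by blast+

lemma sc_0: "sc 0 = 0"
  using sc_add[of 0 0] by simp

lemma sc_minus: "sc (- x) = - sc x"
  using sc_add[of x "- x"] sc_0 by (simp add: minus_unique)

definition lcomb :: "complex list \<Rightarrow> 'a list \<Rightarrow> 'a" where
  "lcomb cs ms = (\<Sum>(c, m) \<leftarrow> zip cs ms. sc c * m)"

lemma lcomb_Nil: "lcomb [] ms = 0" "lcomb cs [] = 0"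
  by (simp_all add: lcomb_def)

lemma lcomb_Cons: "lcomb (c # cs) (m # ms) = sc c * m + lcomb cs ms"
  by (simp add: lcomb_def)

lemma lcomb_add: "lcomb cs ms + lcomb ds ms = lcomb (list_add cs ds) ms"
proof (induction cs ds arbitrary: ms rule: list_add.induct)
  case (3 c cs d ds)
  then show ?case
    by (cases ms) (simp_all add: lcomb_Cons lcomb_Nil sc_add distrib_right add_ac flip: 3)
qed (simp_all add: lcomb_Nil)

lemma lcomb_uminus: "- lcomb cs ms = lcomb (map uminus cs) ms"
proof (induction cs arbitrary: ms)
  case (Cons c cs)
  then show ?case by (cases ms) (simp_all add: lcomb_Cons lcomb_Nil sc_minus flip: Cons)
qed (simp add: lcomb_Nil)

lemma lcomb_diff: "lcomb cs ms - lcomb ds ms = lcomb (list_add cs (map uminus ds)) ms"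
  by (metis lcomb_add lcomb_uminus diff_conv_add_uminus)

lemma lcomb_eq_0I: "list_all (\<lambda>c. c = 0) cs \<Longrightarrow> lcomb cs ms = 0"
proof (induction cs arbitrary: ms)
  case (Cons c cs)
  then show ?case by (cases ms) (simp_all add: lcomb_Cons lcomb_Nil sc_0)
qed (simp add: lcomb_Nil)

lemma sc_mult_nth_eq_lcomb: "k < length ms \<Longrightarrow> sc c * ms ! k = lcomb (replicate k 0 @ [c]) ms"
proof (induction ms arbitrary: k)
  case (Cons m ms)
  then show ?case by (cases k) (simp_all add: lcomb_Cons sc_0 lcomb_eq_0I)
qed simp

text \<open>Instantiated at an explicit list ms of monomials and simplified, this yields the rewrite
  rules sc c * m_k = lcomb [0, ..., 0, c] ms, which gather the terms of a normal form into a
  single coefficient list over ms.\<close>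

lemma lcomb_basis:
  "list_all (\<lambda>k. \<forall>c. sc c * ms ! k = lcomb (replicate k 0 @ [c]) ms) [0..<length ms]"
  by (simp add: list_all_iff sc_mult_nth_eq_lcomb)

lemma lcomb_eqI:
  "list_all (\<lambda>c. c = 0) (list_add cs (map uminus ds)) \<Longrightarrow> lcomb cs ms = lcomb ds ms"
  using lcomb_eq_0I[of "list_add cs (map uminus ds)" ms] by (simp flip: lcomb_diff)

lemma sc_1_cancel: "sc 1 * a = sc 1 * b \<Longrightarrow> a = b"
  by (simp add: sc_1)

lemma sc_mult_sc: "sc a * (sc b * x) = sc (a * b) * x" "sc a * sc b = sc (a * b)"
  by (simp_all add: sc_mult mult.assoc)

lemma mult_sc_left: "x * (sc c * y) = sc c * (x * y)"
  by (metis mult.assoc sc_central)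

lemma mult_sc_right: "x * sc c = sc c * x"
  by (simp add: sc_central)

lemma fps_const_sc_commute: "fps_const (sc c) * f = f * fps_const (sc c)"
  by (simp add: fps_eq_iff fps_const_mult_right sc_central)

abbreviation S :: "complex \<Rightarrow> 'a fps \<Rightarrow> 'a fps" where
  "S \<equiv> fps_subst_scale sc"

lemma fps_subst_scale_add: "S c (f + g) = S c f + S c g"
  by (simp add: fps_subst_scale_def fps_eq_iff distrib_left)

lemma fps_subst_scale_diff: "S c (f - g) = S c f - S c g"
  by (simp add: fps_subst_scale_def fps_eq_iff right_diff_distrib)

lemma fps_subst_scale_const: "S c (fps_const x) = fps_const x"
  by (simp add: fps_subst_scale_def fps_eq_iff sc_1 sc_0)

lemma fps_subst_scale_one: "S c 1 = 1"
  using fps_subst_scale_const[of c 1] by simp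

lemma fps_subst_scale_X: "S c fps_X = fps_of_list [0, sc c]"
  by (simp add: fps_subst_scale_def fps_of_list_def fps_eq_iff fps_X_def sc_0 nth_Cons
      split: nat.splits)

lemma fps_subst_scale_mult: "S c (f * g) = S c f * S c g"
proof (rule fps_ext)
  fix n
  have "sc (c ^ i) * f $ i * (sc (c ^ (n - i)) * g $ (n - i)) = sc (c ^ n) * (f $ i * g $ (n - i))"
    if "i \<le> n" for i
  proof -
    have "c ^ i * c ^ (n - i) = c ^ n" using that by (simp flip: power_add)
    then show ?thesis by (simp only: mult.assoc mult_sc_left[of "f $ i"] sc_mult_sc(1))
  qed
  then have "(S c f * S c g) $ n = (\<Sum>i = 0..n. sc (c ^ n) * (f $ i * g $ (n - i)))"
    unfolding fps_mult_nth by (intro sum.cong) (simp_all add: fps_subst_scale_def)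
  then show "S c (f * g) $ n = (S c f * S c g) $ n"
    by (simp add: fps_subst_scale_def fps_mult_nth sum_distrib_left)
qed

lemma fps_subst_scale_scale: "S c (S d f) = S (c * d) f"
  by (simp add: fps_subst_scale_def fps_eq_iff power_mult_distrib sc_mult_sc)

lemma fps_subst_scale_by_1: "S 1 f = f"
  by (simp add: fps_subst_scale_def fps_eq_iff sc_1)

lemma fps_subst_scale_nth_0: "S c f $ 0 = f $ 0"
  by (simp add: fps_subst_scale_def sc_1)

lemma fps_subst_scale_fps_of_list_single: "S c (fps_of_list [x]) = fps_of_list [x]"
  using fps_subst_scale_const[of c x] by (simp add: fps_of_list_Cons)

lemma fps_subst_scale_fps_of_list_Cons:
  "S c (fps_of_list (x # y # ys))
     = fps_of_list [x] + fps_of_list [0, sc c] * S c (fps_of_list (y # ys))"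
proof -
  have "fps_of_list [x] = fps_const x" by (simp add: fps_of_list_Cons)
  then show ?thesis
    by (simp add: fps_of_list_Cons[of x "y # ys"] fps_subst_scale_add fps_subst_scale_mult
        fps_subst_scale_const flip: fps_subst_scale_X)
qed

lemma fps_subst_scale_X_commute: "S c fps_X * f = f * S c fps_X"
proof -
  have "S c fps_X = fps_X * fps_const (sc c)"
    by (simp add: fps_subst_scale_X fps_of_list_def fps_eq_iff nth_Cons split: nat.splits)
  then show ?thesis
    by (metis fps_const_sc_commute fps_mult_fps_X_commute mult.assoc)
qed

lemma fps_subst_scale_inv2:
  assumes "u * f $ 0 = 1" "f $ 0 * u = 1"
  shows "S c (fps_inv2 f) = fps_inv2 (S c f)"
  by (rule fps_inv2_unique[symmetric])
    (simp_all add: fps_mult_inv2[OF assms] fps_inv2_mult[OF assms] fps_subst_scale_one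
      flip: fps_subst_scale_mult)

end

section \<open>Relations of the quantum group\<close>

lemma qq_nonzero [simp]: "qq h \<noteq> 0"
  by (simp add: qq_def)

lemma qpow_0 [simp]: "qpow h 0 = 1"
  and qpow_1 [simp]: "qpow h 1 = qq h"
  and qpow_numeral [simp]: "qpow h (numeral n) = qq h ^ numeral n"
  and qpow_minus: "qpow h (- x) = inverse (qpow h x)"
  by (simp_all add: qpow_def qq_def exp_minus mult.commute flip: exp_of_nat_mult)

lemma qpow_minus_numeral [simp]: "qpow h (- numeral n) = inverse (qq h ^ numeral n)"
  and qpow_minus_1 [simp]: "qpow h (- 1) = inverse (qq h)"
  by (simp_all add: qpow_minus)

locale Uq_gl3 = C_algebra sc for sc :: "complex \<Rightarrow> 'a::ring_1" +
  fixes h :: complex and E1 E2 F1 F2 :: 'a and K :: "complex \<Rightarrow> complex \<Rightarrow> complex \<Rightarrow> 'a"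
  assumes q_square_neq_1: "(qq h)\<^sup>2 \<noteq> 1"
    and relations: "Uq_gl3_rel h sc E1 E2 F1 F2 K"
begin

abbreviation "q \<equiv> qq h"
abbreviation "e3 \<equiv> E3 h sc E1 E2"
abbreviation "f3 \<equiv> F3 h sc F1 F2"

lemma kap_nonzero: "kap h \<noteq> 0"
  using q_square_neq_1 by (auto simp: kap_def power2_eq_square field_simps)

lemma qnum_2: "qnum h 2 = q + inverse q"
  using kap_nonzero by (simp add: qnum_def kap_def field_simps power2_eq_square)

lemma K_0: "K 0 0 0 = 1"
  and K_add: "K (a1 + b1) (a2 + b2) (a3 + b3) = K a1 a2 a3 * K b1 b2 b3"
  and K_E1_K: "K a1 a2 a3 * E1 * K (- a1) (- a2) (- a3) = sc (qpow h (a1 - a2)) * E1"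
  and K_E2_K: "K a1 a2 a3 * E2 * K (- a1) (- a2) (- a3) = sc (qpow h (a2 - a3)) * E2"
  and K_F1_K: "K a1 a2 a3 * F1 * K (- a1) (- a2) (- a3) = sc (qpow h (- (a1 - a2))) * F1"
  and K_F2_K: "K a1 a2 a3 * F2 * K (- a1) (- a2) (- a3) = sc (qpow h (- (a2 - a3))) * F2"
  and E1_F1_comm: "E1 * F1 - F1 * E1 = sc (inverse (kap h)) * (K 1 (-1) 0 - K (-1) 1 0)"
  and E2_F2_comm: "E2 * F2 - F2 * E2 = sc (inverse (kap h)) * (K 0 1 (-1) - K 0 (-1) 1)"
  and E1_F2_comm: "E1 * F2 - F2 * E1 = 0"
  and E2_F1_comm: "E2 * F1 - F1 * E2 = 0"
  and E_serre_1: "E1 * E1 * E2 - sc (qnum h 2) * (E1 * E2 * E1) + E2 * E1 * E1 = 0"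
  and E_serre_2: "E2 * E2 * E1 - sc (qnum h 2) * (E2 * E1 * E2) + E1 * E2 * E2 = 0"
  and F_serre_1: "F1 * F1 * F2 - sc (qnum h 2) * (F1 * F2 * F1) + F2 * F1 * F1 = 0"
  and F_serre_2: "F2 * F2 * F1 - sc (qnum h 2) * (F2 * F1 * F2) + F1 * F2 * F2 = 0"
  using relations unfolding Uq_gl3_rel_def by blast+

lemma K_conj_imp_commute:
  assumes "K a1 a2 a3 * X * K (- a1) (- a2) (- a3) = sc c * X"
  shows "K a1 a2 a3 * X = sc c * (X * K a1 a2 a3)"
proof -
  have "K (- a1) (- a2) (- a3) * K a1 a2 a3 = 1"
    using K_add[of "- a1" a1 "- a2" a2 "- a3" a3] K_0 by simp
  then have "K a1 a2 a3 * X = (K a1 a2 a3 * X * K (- a1) (- a2) (- a3)) * K a1 a2 a3"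
    by (simp add: mult.assoc)
  also have "\<dots> = sc c * X * K a1 a2 a3"
    by (simp only: assms)
  finally show ?thesis
    by (simp only: mult.assoc)
qed

lemma K_E1: "K a1 a2 a3 * E1 = sc (qpow h (a1 - a2)) * (E1 * K a1 a2 a3)"
  and K_E2: "K a1 a2 a3 * E2 = sc (qpow h (a2 - a3)) * (E2 * K a1 a2 a3)"
  and K_F1: "K a1 a2 a3 * F1 = sc (qpow h (- (a1 - a2))) * (F1 * K a1 a2 a3)"
  and K_F2: "K a1 a2 a3 * F2 = sc (qpow h (- (a2 - a3))) * (F2 * K a1 a2 a3)"
  by (intro K_conj_imp_commute K_E1_K K_E2_K K_F1_K K_F2_K)+

lemma E1_F1:
    "E1 * F1 = F1 * E1 + (sc (inverse (kap h)) * K 1 (-1) 0 - sc (inverse (kap h)) * K (-1) 1 0)"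
  and E2_F2:
    "E2 * F2 = F2 * E2 + (sc (inverse (kap h)) * K 0 1 (-1) - sc (inverse (kap h)) * K 0 (-1) 1)"
  and E1_F2: "E1 * F2 = F2 * E1"
  and E2_F1: "E2 * F1 = F1 * E2"
  using E1_F1_comm E2_F2_comm E1_F2_comm E2_F1_comm
  by (simp_all only: diff_eq_eq right_diff_distrib add.commute add_0)

text \<open>Identities in the algebra are proved by multiplying both sides by sc 1, so that every
  monomial carries a scalar, rewriting them into ordered monomials (F's, then E's, then K)
  with one scalar in front, collecting the terms with lcomb_basis and comparing the complex
  coefficients. The coefficient check first clears inverse (kap h), treating kap h as an atom,
  and only then substitutes kap h = q - inverse q. The scalar rules are instantiated at the
  generators only: in general mult_sc_left and sc_mult_sc rewrite each other's results forever.\<close>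

lemmas scalar_normalise =
  mult_sc_left[of E1] mult_sc_left[of E2] mult_sc_left[of F1] mult_sc_left[of F2]
  mult_sc_left[of "K a1 a2 a3" for a1 a2 a3] mult_sc_left[of e3] mult_sc_left[of f3]
  mult_sc_right[of E1] mult_sc_right[of E2] mult_sc_right[of F1] mult_sc_right[of F2]
  mult_sc_right[of "K a1 a2 a3" for a1 a2 a3] mult_sc_right[of e3] mult_sc_right[of f3]
  sc_mult_sc

lemmas ring_normalise = mult.assoc distrib_left distrib_right left_diff_distrib right_diff_distrib

lemmas generator_normalise =
  K_E1 K_E2 K_F1 K_F2 E1_F1 E2_F2 E1_F2 E2_F1 K_add[symmetric] K_0
  K_E1[THEN mult_rewrite_prefix] K_E2[THEN mult_rewrite_prefix]
  K_F1[THEN mult_rewrite_prefix] K_F2[THEN mult_rewrite_prefix]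
  E1_F1[THEN mult_rewrite_prefix] E2_F2[THEN mult_rewrite_prefix]
  E1_F2[THEN mult_rewrite_prefix] E2_F1[THEN mult_rewrite_prefix]
  K_add[symmetric, THEN mult_rewrite_prefix]

lemma F2_F1_F1: "F2 * (F1 * F1) = sc (q + inverse q) * (F1 * (F2 * F1)) - F1 * (F1 * F2)"
  and F2_F2_F1: "F2 * (F2 * F1) = sc (q + inverse q) * (F2 * (F1 * F2)) - F1 * (F2 * F2)"
  and E2_E1_E1: "E2 * (E1 * E1) = sc (q + inverse q) * (E1 * (E2 * E1)) - E1 * (E1 * E2)"
  and E2_E2_E1: "E2 * (E2 * E1) = sc (q + inverse q) * (E2 * (E1 * E2)) - E1 * (E2 * E2)"
  using F_serre_1 F_serre_2 E_serre_1 E_serre_2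
  by (simp_all add: qnum_2 mult.assoc eq_diff_eq add_eq_0_iff2 algebra_simps)

lemmas lcomb_normalise = lcomb_add lcomb_diff lcomb_uminus list_add.simps list.map

lemmas lcomb_eq_cases = lcomb_eqI lcomb_eq_0I lcomb_eq_0I[symmetric]

lemma K_E3: "K a1 a2 a3 * e3 = sc (qpow h (a1 - a3)) * (e3 * K a1 a2 a3)"
  unfolding E3_def
  by (rule sc_1_cancel; simp add: ring_normalise scalar_normalise generator_normalise;
      simp only: lcomb_normalise lcomb_basis[of
        "[E1 * (E2 * K a1 a2 a3), E2 * (E1 * K a1 a2 a3)]", simplified];
      rule lcomb_eq_cases; simp add: qpow_def algebra_simps flip: exp_add)

lemma K_F3: "K a1 a2 a3 * f3 = sc (qpow h (- (a1 - a3))) * (f3 * K a1 a2 a3)"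
  unfolding F3_def
  by (rule sc_1_cancel; simp add: ring_normalise scalar_normalise generator_normalise;
      simp only: lcomb_normalise lcomb_basis[of
        "[F2 * (F1 * K a1 a2 a3), F1 * (F2 * K a1 a2 a3)]", simplified];
      rule lcomb_eq_cases; simp add: qpow_def algebra_simps flip: exp_add)

lemma E1_F3: "E1 * f3 = f3 * E1 - sc q * (F2 * K 1 (-1) 0)"
  unfolding F3_def
  by (rule sc_1_cancel; simp add: ring_normalise scalar_normalise generator_normalise;
      simp only: lcomb_normalise lcomb_basis[of
        "[F2 * K (-1) 1 0, F2 * K 1 (-1) 0, F1 * (F2 * E1), F2 * (F1 * E1)]", simplified];
      rule lcomb_eq_cases;
      simp add: field_simps kap_nonzero; simp add: kap_def field_simps; algebra)

lemma E2_F3: "E2 * f3 = f3 * E2 + F1 * K 0 (-1) 1"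
  unfolding F3_def
  by (rule sc_1_cancel; simp add: ring_normalise scalar_normalise generator_normalise;
      simp only: lcomb_normalise lcomb_basis[of
        "[F1 * K 0 (-1) 1, F1 * K 0 1 (-1), F1 * (F2 * E2), F2 * (F1 * E2)]", simplified];
      rule lcomb_eq_cases;
      simp add: field_simps kap_nonzero; simp add: kap_def field_simps; algebra)

lemma E3_F1: "e3 * F1 = F1 * e3 - E2 * K (-1) 1 0"
  unfolding E3_def
  by (rule sc_1_cancel; simp add: ring_normalise scalar_normalise generator_normalise;
      simp only: lcomb_normalise lcomb_basis[of
        "[E2 * K (-1) 1 0, E2 * K 1 (-1) 0, F1 * (E1 * E2), F1 * (E2 * E1)]", simplified];
      rule lcomb_eq_cases;
      simp add: field_simps kap_nonzero; simp add: kap_def field_simps; algebra)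

lemma E3_F2: "e3 * F2 = F2 * e3 + sc (inverse q) * (E1 * K 0 1 (-1))"
  unfolding E3_def
  by (rule sc_1_cancel; simp add: ring_normalise scalar_normalise generator_normalise;
      simp only: lcomb_normalise lcomb_basis[of
        "[E1 * K 0 (-1) 1, E1 * K 0 1 (-1), F2 * (E1 * E2), F2 * (E2 * E1)]", simplified];
      rule lcomb_eq_cases;
      simp add: field_simps kap_nonzero; simp add: kap_def field_simps; algebra)

lemma E3_F3: "e3 * f3 = f3 * e3 + sc (inverse (kap h)) * (K 1 0 (-1) - K (-1) 0 1)"
  unfolding F3_def
  by (rule sc_1_cancel; simp add: ring_normalise scalar_normalise generator_normalise E3_F1 E3_F2
        E3_F1[THEN mult_rewrite_prefix] E3_F2[THEN mult_rewrite_prefix];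
      simp only: lcomb_normalise lcomb_basis[of
        "[K (-1) 0 1, K (-1) 2 (-1), K 1 0 (-1), F1 * (E1 * K 0 1 (-1)),
          F1 * (F2 * e3), F2 * (E2 * K (-1) 1 0), F2 * (F1 * e3)]", simplified];
      rule lcomb_eq_cases;
      simp add: field_simps kap_nonzero; simp add: kap_def field_simps; algebra)

lemma F2_F1: "F2 * F1 = f3 + sc q * (F1 * F2)"
  by (simp add: F3_def)

lemma F3_F1: "f3 * F1 = sc (inverse q) * (F1 * f3)"
  unfolding F3_def
  by (rule sc_1_cancel; simp add: ring_normalise scalar_normalise generator_normalise F2_F1_F1
        F2_F1_F1[THEN mult_rewrite_prefix2];
      simp only: lcomb_normalise lcomb_basis[of
        "[F1 * (F1 * F2), F1 * (F2 * F1)]", simplified];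
      rule lcomb_eq_cases;
      simp add: field_simps kap_nonzero; simp add: kap_def field_simps; algebra)

lemma F2_F3: "F2 * f3 = sc (inverse q) * (f3 * F2)"
  unfolding F3_def
  by (rule sc_1_cancel; simp add: ring_normalise scalar_normalise generator_normalise F2_F2_F1
        F2_F2_F1[THEN mult_rewrite_prefix2];
      simp only: lcomb_normalise lcomb_basis[of
        "[F1 * (F2 * F2), F2 * (F1 * F2)]", simplified];
      rule lcomb_eq_cases;
      simp add: field_simps kap_nonzero; simp add: kap_def field_simps; algebra)

lemma E2_E1: "E2 * E1 = sc q * (E1 * E2) - sc q * e3"
  by (simp add: E3_def right_diff_distrib sc_mult_sc sc_1)

lemma E3_E1: "e3 * E1 = sc (inverse q) * (E1 * e3)"
  unfolding E3_def
  by (rule sc_1_cancel; simp add: ring_normalise scalar_normalise generator_normalise E2_E1_E1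
        E2_E1_E1[THEN mult_rewrite_prefix2];
      simp only: lcomb_normalise lcomb_basis[of
        "[E1 * (E1 * E2), E1 * (E2 * E1)]", simplified];
      rule lcomb_eq_cases;
      simp add: field_simps kap_nonzero; simp add: kap_def field_simps; algebra)

lemma E2_E3: "E2 * e3 = sc (inverse q) * (e3 * E2)"
  unfolding E3_def
  by (rule sc_1_cancel; simp add: ring_normalise scalar_normalise generator_normalise E2_E2_E1
        E2_E2_E1[THEN mult_rewrite_prefix2];
      simp only: lcomb_normalise lcomb_basis[of
        "[E1 * (E2 * E2), E2 * (E1 * E2)]", simplified];
      rule lcomb_eq_cases;
      simp add: field_simps kap_nonzero; simp add: kap_def field_simps; algebra)

section \<open>The Gauss factors as polynomials\<close>

abbreviation "N \<equiv> Nmat h sc E1 E2 F1 F2 K"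

lemma N_fps_of_list:
  "N 1 1 = fps_of_list [1, - K (-2) 0 0]"
  "N 2 2 = fps_of_list [1, - K 0 (-2) 0]"
  "N 3 3 = fps_of_list [1, - K 0 0 (-2)]"
  "N 1 2 = fps_of_list [sc (kap h) * sc q * F1 * K (-1) (-1) 0]"
  "N 2 3 = fps_of_list [sc (kap h) * sc q * F2 * K 0 (-1) (-1)]"
  "N 1 3 = fps_of_list [sc (kap h) * sc q * f3 * K (-1) 0 (-1)]"
  "N 2 1 = fps_of_list [sc (kap h) * E1]"
  "N 3 2 = fps_of_list [sc (kap h) * E2]"
  "N 3 1 = fps_of_list [sc (kap h) * e3]"
  by (simp_all add: Nmat_def fps_of_list_def fps_eq_iff nth_Cons split: nat.splits)

definition N11_scaled :: "'a fps" where
  "N11_scaled = S (q\<^sup>2) (N 1 1)"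

lemmas fps_of_list_normalise =
  N_fps_of_list N11_scaled_def fps_subst_scale_fps_of_list_single fps_subst_scale_fps_of_list_Cons
  fps_subst_scale_X fps_X_eq_fps_of_list fps_of_list_mult fps_of_list_add fps_of_list_diff
  fps_of_list_uminus list_conv.simps list_add.simps list.map

lemmas relation_normalise = generator_normalise
  K_E3 K_F3 E1_F3 E2_F3 E3_F1 E3_F2 E3_F3 F2_F1 F3_F1 F2_F3 E2_E1 E3_E1 E2_E3
  K_E3[THEN mult_rewrite_prefix] K_F3[THEN mult_rewrite_prefix]
  E1_F3[THEN mult_rewrite_prefix] E2_F3[THEN mult_rewrite_prefix]
  E3_F1[THEN mult_rewrite_prefix] E3_F2[THEN mult_rewrite_prefix]
  E3_F3[THEN mult_rewrite_prefix] F2_F1[THEN mult_rewrite_prefix]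
  F3_F1[THEN mult_rewrite_prefix] F2_F3[THEN mult_rewrite_prefix]
  E2_E1[THEN mult_rewrite_prefix] E3_E1[THEN mult_rewrite_prefix]
  E2_E3[THEN mult_rewrite_prefix]

lemma N11_scaled_N21:
  "N11_scaled * N 2 1 = N 2 1 * N 1 1"
  by (simp only: fps_of_list_normalise; rule arg_cong[of _ _ fps_of_list];
      simp only: list.inject simp_thms; intro conjI; rule sc_1_cancel;
      simp add: ring_normalise scalar_normalise relation_normalise;
      simp only: lcomb_normalise lcomb_basis[of
        "[E1, E1 * K (-2) 0 0]", simplified];
      rule lcomb_eq_cases;
      simp add: field_simps kap_nonzero; simp add: kap_def field_simps; algebra)

lemma N11_scaled_N31:
  "N11_scaled * N 3 1 = N 3 1 * N 1 1"
  by (simp only: fps_of_list_normalise; rule arg_cong[of _ _ fps_of_list];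
      simp only: list.inject simp_thms; intro conjI; rule sc_1_cancel;
      simp add: ring_normalise scalar_normalise relation_normalise;
      simp only: lcomb_normalise lcomb_basis[of
        "[e3, e3 * K (-2) 0 0]", simplified];
      rule lcomb_eq_cases;
      simp add: field_simps kap_nonzero; simp add: kap_def field_simps; algebra)

text \<open>The numerator M_ij of N''_ij = D'^-1 M_ij.\<close>

definition elim_num :: "'a fps \<Rightarrow> nat \<Rightarrow> nat \<Rightarrow> 'a fps" where
  "elim_num Y i j = N11_scaled * N i j - Y * N i 1 * N 1 j"

lemma N11_elim_num_22_commute:
  "N 1 1 * elim_num fps_X 2 2 = elim_num fps_X 2 2 * N 1 1"
  by (simp only: fps_of_list_normalise elim_num_def; rule arg_cong[of _ _ fps_of_list];
      simp only: list.inject simp_thms; intro conjI; rule sc_1_cancel;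
      simp add: ring_normalise scalar_normalise relation_normalise;
      simp only: lcomb_normalise lcomb_basis[of
        "[K (-2) (-2) 0, K (-2) 0 0, K (-4) (-2) 0, K (-4) 0 0, K 0 (-2) 0,
          F1 * (E1 * K (-1) (-1) 0), F1 * (E1 * K (-3) (-1) 0)]", simplified];
      rule lcomb_eq_cases;
      simp add: field_simps kap_nonzero; simp add: kap_def field_simps; algebra)

lemma elim_num_22_32_commute:
  "elim_num fps_X 2 2 * S (inverse (q\<^sup>2)) (elim_num fps_X 3 2)
     = elim_num fps_X 3 2 * S (inverse (q\<^sup>2)) (elim_num fps_X 2 2)"
  by (simp only: fps_of_list_normalise elim_num_def; rule arg_cong[of _ _ fps_of_list];
      simp only: list.inject simp_thms; intro conjI; rule sc_1_cancel;
      simp add: ring_normalise scalar_normalise relation_normalise;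
      simp only: lcomb_normalise lcomb_basis[of
        "[E2, E2 * K (-2) (-2) 0, E2 * K (-2) 0 0, E2 * K (-4) (-2) 0, E2 * K (-4) 0 0,
          E2 * K 0 (-2) 0, F1 * (e3 * K (-1) (-1) 0), F1 * (e3 * K (-1) (-3) 0),
          F1 * (e3 * K (-3) (-1) 0), F1 * (e3 * K (-3) (-3) 0),
          F1 * (E1 * (E2 * K (-1) (-1) 0)), F1 * (E1 * (E2 * K (-3) (-1) 0)),
          F1 * (F1 * (E1 * (e3 * K (-2) (-2) 0)))]", simplified];
      rule lcomb_eq_cases;
      simp add: field_simps kap_nonzero; simp add: kap_def field_simps; algebra)

definition casimir_poly :: "'a fps" where
  "casimir_poly = fps_of_list [1, - Cas1 h sc E1 E2 F1 F2 K, - Cas2 h sc E1 E2 F1 F2 K, - Cas3 K]"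

lemma elim_num_schur_complement:
  "elim_num fps_X 2 2 * S (inverse (q\<^sup>2)) (elim_num fps_X 3 3)
     - S (inverse (q\<^sup>2)) fps_X * elim_num fps_X 3 2 * S (inverse (q\<^sup>2)) (elim_num 1 2 3)
   = N 1 1 * casimir_poly"
  by (simp only: fps_of_list_normalise elim_num_def casimir_poly_def mult_1_left;
      rule arg_cong[of _ _ fps_of_list]; simp only: list.inject simp_thms; intro conjI;
      rule sc_1_cancel; simp add: ring_normalise scalar_normalise relation_normalise
        Cas1_def Cas2_def Cas3_def Kq_def;
      simp only: lcomb_normalise lcomb_basis[of
        "[K (-2) (-2) (-2), K (-2) (-2) 0, K (-2) 0 (-2), K (-2) 0 0, K (-4) (-2) (-2),
          K (-4) (-2) 0, K (-4) 0 (-2), K (-4) 0 0, K 0 (-2) (-2), K 0 (-2) 0,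
          K 0 0 (-2), F1 * (E1 * K (-1) (-1) (-2)), F1 * (E1 * K (-1) (-1) 0),
          F1 * (E1 * K (-3) (-1) (-2)), F1 * (E1 * K (-3) (-1) 0),
          F2 * (E2 * K (-2) (-1) (-1)), F2 * (E2 * K (-4) (-1) (-1)),
          F2 * (E2 * K 0 (-1) (-1)), f3 * (e3 * K (-1) (-2) (-1)),
          f3 * (e3 * K (-1) 0 (-1)), f3 * (e3 * K (-3) (-2) (-1)),
          f3 * (e3 * K (-3) 0 (-1)), F1 * (F2 * (e3 * K (-1) (-2) (-1))),
          F1 * (F2 * (e3 * K (-3) (-2) (-1))), f3 * (E1 * (E2 * K (-1) 0 (-1))),
          f3 * (E1 * (E2 * K (-3) 0 (-1))),
          F1 * (f3 * (E1 * (e3 * K (-2) (-1) (-1))))]", simplified];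
      rule lcomb_eq_cases;
      simp add: field_simps kap_nonzero; simp add: kap_def field_simps; algebra)

lemma N11_nth_0: "N 1 1 $ 0 = 1"
  by (simp add: N_fps_of_list fps_of_list_def del: One_nat_def)

lemma N11_scaled_nth_0: "N11_scaled $ 0 = 1"
  by (simp add: N11_scaled_def fps_subst_scale_nth_0 N11_nth_0 del: One_nat_def)

lemma elim_num_22_nth_0: "elim_num fps_X 2 2 $ 0 = 1"
  by (simp add: elim_num_def N11_scaled_nth_0 N_fps_of_list fps_of_list_def del: One_nat_def)

lemma N2_eq_elim_num:
  "N2_22 h sc E1 E2 F1 F2 K = fps_inv2 N11_scaled * elim_num fps_X 2 2"
  "N2_23 h sc E1 E2 F1 F2 K = fps_inv2 N11_scaled * elim_num 1 2 3"
  "N2_32 h sc E1 E2 F1 F2 K = fps_inv2 N11_scaled * elim_num fps_X 3 2"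
  "N2_33 h sc E1 E2 F1 F2 K = fps_inv2 N11_scaled * elim_num fps_X 3 3"
proof -
  have inv: "fps_inv2 N11_scaled * N11_scaled = 1" "N 1 1 * fps_inv2 (N 1 1) = 1"
    using fps_inv2_of_nth_0_eq_1 N11_scaled_nth_0 N11_nth_0 by blast+
  have "N i 1 * fps_inv2 (N 1 1) = fps_inv2 N11_scaled * N i 1"
    if "N11_scaled * N i 1 = N i 1 * N 1 1" for i
    using intertwine_inverses[OF that inv] .
  note entry2 = elim_entry[OF this[OF N11_scaled_N21] inv(1)]
    and entry3 = elim_entry[OF this[OF N11_scaled_N31] inv(1)]
  show "N2_22 h sc E1 E2 F1 F2 K = fps_inv2 N11_scaled * elim_num fps_X 2 2"
    "N2_32 h sc E1 E2 F1 F2 K = fps_inv2 N11_scaled * elim_num fps_X 3 2"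
    "N2_33 h sc E1 E2 F1 F2 K = fps_inv2 N11_scaled * elim_num fps_X 3 3"
    unfolding N2_22_def N2_32_def N2_33_def elim_num_def Let_def
    by (simp_all only: entry2 entry3 fps_mult_fps_X_commute[of "fps_inv2 N11_scaled"])
  show "N2_23 h sc E1 E2 F1 F2 K = fps_inv2 N11_scaled * elim_num 1 2 3"
    using entry2[of 1] by (simp add: N2_23_def elim_num_def Let_def del: One_nat_def)
qed

lemma N3_33_eq_elim_num:
  "N3_33 h sc E1 E2 F1 F2 K = fps_inv2 N11_scaled * (elim_num fps_X 3 3
     - fps_X * elim_num fps_X 3 2 * fps_inv2 (elim_num fps_X 2 2) * elim_num 1 2 3)"
proof -
  define M where "M = elim_num fps_X 2 2"
  define Di' where "Di' = fps_inv2 N11_scaled"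
  have scaled_inv: "N11_scaled * Di' = 1" "Di' * N11_scaled = 1"
    using fps_inv2_of_nth_0_eq_1 N11_scaled_nth_0 unfolding Di'_def by blast+
  have M_inv: "M * fps_inv2 M = 1" "fps_inv2 M * M = 1"
    using fps_inv2_of_nth_0_eq_1 elim_num_22_nth_0 unfolding M_def by blast+
  have cancel: "a * (b * z) = z" if "a * b = 1" for a b z :: "'a fps"
    using that by (simp flip: mult.assoc)
  have "fps_inv2 (Di' * M) = fps_inv2 M * N11_scaled"
    by (rule fps_inv2_unique) (simp_all only: mult.assoc cancel scaled_inv M_inv mult_1_right)
  moreover have "fps_X * (Di' * Y) = Di' * (fps_X * Y)" for Y
    by (simp only: fps_mult_fps_X_commute[of Di'] flip: mult.assoc)
  ultimately show ?thesis
    unfolding N3_33_def N2_eq_elim_num Di'_def[symmetric] M_def[symmetric]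
    by (simp only: mult.assoc cancel scaled_inv right_diff_distrib)
qed

lemma gauss_factor_product:
  "S (q\<^sup>2) (N 1 1) * N2_22 h sc E1 E2 F1 F2 K
     * S (inverse (q\<^sup>2)) (N3_33 h sc E1 E2 F1 F2 K) = casimir_poly"
proof -
  define c where "c = inverse (q\<^sup>2)"
  define M where "M = elim_num fps_X 2 2"
  define R where
    "R = elim_num fps_X 3 3 - fps_X * elim_num fps_X 3 2 * fps_inv2 M * elim_num 1 2 3"
  have scaled_inv: "N11_scaled * fps_inv2 N11_scaled = 1"
    using fps_inv2_of_nth_0_eq_1 N11_scaled_nth_0 by blast
  have N11_inv: "N 1 1 * fps_inv2 (N 1 1) = 1" "fps_inv2 (N 1 1) * N 1 1 = 1"
    using fps_inv2_of_nth_0_eq_1 N11_nth_0 by blast+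
  have M_inv: "S c M * S c (fps_inv2 M) = 1"
    using fps_inv2_of_nth_0_eq_1(1)[of "S c M"] elim_num_22_nth_0
    by (simp add: M_def fps_subst_scale_nth_0 fps_subst_scale_inv2[of 1])
  have "S c N11_scaled = N 1 1"
    by (simp add: N11_scaled_def c_def fps_subst_scale_scale fps_subst_scale_by_1)
  then have S_scaled_inv: "S c (fps_inv2 N11_scaled) = fps_inv2 (N 1 1)"
    using N11_scaled_nth_0 by (simp add: fps_subst_scale_inv2[of 1])
  have M_commute: "M * fps_inv2 (N 1 1) = fps_inv2 (N 1 1) * M"
    using intertwine_inverses[OF N11_elim_num_22_commute N11_inv(2,1)] by (simp add: M_def)
  have "S (q\<^sup>2) (N 1 1) * N2_22 h sc E1 E2 F1 F2 K * S c (N3_33 h sc E1 E2 F1 F2 K)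
      = (N11_scaled * fps_inv2 N11_scaled) * (M * fps_inv2 (N 1 1)) * S c R"
    by (simp add: N11_scaled_def[symmetric] N2_eq_elim_num N3_33_eq_elim_num M_def[symmetric] R_def
        fps_subst_scale_mult S_scaled_inv mult.assoc del: One_nat_def)
  also have "\<dots> = fps_inv2 (N 1 1) * (M * S c (elim_num fps_X 3 3)
      - S c fps_X * (M * S c (elim_num fps_X 3 2)) * S c (fps_inv2 M) * S c (elim_num 1 2 3))"
    by (simp add: scaled_inv M_commute R_def fps_subst_scale_diff fps_subst_scale_mult mult.assoc
        right_diff_distrib fps_subst_scale_X_commute del: One_nat_def)
  also have "\<dots> = fps_inv2 (N 1 1) * (N 1 1 * casimir_poly)"
    unfolding elim_num_22_32_commute[folded c_def M_def]
    by (simp add: mult.assoc M_inv elim_num_schur_complement[folded c_def M_def, symmetric]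
        del: One_nat_def)
  also have "\<dots> = casimir_poly"
    by (simp add: N11_inv(2) del: One_nat_def flip: mult.assoc)
  finally show ?thesis by (simp add: c_def)
qed

end

theorem mainTheorem4:
  fixes h :: complex
    and sc :: "complex \<Rightarrow> 'a::ring_1"
    and E1 E2 F1 F2 :: 'a
    and K :: "complex \<Rightarrow> complex \<Rightarrow> complex \<Rightarrow> 'a"
  assumes "(qq h)^2 \<noteq> 1"
    and "is_C_algebra sc"
    and "Uq_gl3_rel h sc E1 E2 F1 F2 K"
  shows "1 - fps_const (Cas1 h sc E1 E2 F1 F2 K) * fps_X
           - fps_const (Cas2 h sc E1 E2 F1 F2 K) * fps_X ^ 2
           - fps_const (Cas3 K) * fps_X ^ 3
         = fps_subst_scale sc ((qq h)^2) (Nmat h sc E1 E2 F1 F2 K 1 1)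
           * N2_22 h sc E1 E2 F1 F2 K
           * fps_subst_scale sc (inverse ((qq h)^2)) (N3_33 h sc E1 E2 F1 F2 K)"
proof -
  interpret Uq_gl3 sc h E1 E2 F1 F2 K
    using assms by unfold_locales
  show ?thesis
    using gauss_factor_product by (simp add: cubic_eq_fps_of_list casimir_poly_def)
qed

end
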